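(* Let $M=(v_1,\dots,v_n)$ be a finite list of nonzero vectors generating $\mathbb{F}_2^3$ such that the multiplicities of the distinct vectors in $M$ have greatest common divisor $1$. Let $\lambda_u=n-\sum_{i=1}^n(-1)^{u\cdot v_i}$ for $u\in\mathbb{F}_2^3\setminus\{0\}$, and let $d_1\le d_2\le\cdots\le d_7$ be the numbers $v_2(\lambda_u)$, $u\ne0$, in increasing order. Let $c_1$ be the order of the largest cyclic factor of the Sylow-$2$ subgroup of $K(G(\mathbb{F}_2^3,M))$. Then $c_1=2^{d_7+1}$ if the $d_i$ are not all equal, and $c_1=2^{d_7}$ if $d_1=d_2=\cdots=d_7$.
   Context: The Cayley graph $G(\mathbb{F}_2^3,M)$ has vertex set $\mathbb{F}_2^3$ and Laplacian $L$ indexed by $\mathbb{F}_2^3$ with $L_{u,u}=n$ and $L_{u,w}=-\#\{i:u+v_i=w\}$ for $u\ne w$; $\operatorname{coker}L\cong\mathbb{Z}\oplus K(G)$ with $K(G)$ finite abelian (the sandpile group). The $\lambda_u$ are the nonzero eigenvalues of $L$. $v_2$ is the $2$-adic valuation. *)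

theory Defs
  imports "HOL-Analysis.Analysis" "HOL-Library.Z2" "HOL-Computational_Algebra.Factorial_Ring"
begin

type_synonym f23 = "bit ^ 3"

definition dotF2 :: "f23 \<Rightarrow> f23 \<Rightarrow> bit" where
  "dotF2 u v = (\<Sum>i\<in>UNIV. u $ i * v $ i)"

definition signF2 :: "f23 \<Rightarrow> f23 \<Rightarrow> int" where
  "signF2 u v = (if dotF2 u v = 0 then 1 else -1)"

definition lam :: "f23 list \<Rightarrow> f23 \<Rightarrow> int" where
  "lam M u = int (length M) - (\<Sum>i<length M. signF2 u (M ! i))"

definition laplacian :: "f23 list \<Rightarrow> f23 \<Rightarrow> f23 \<Rightarrow> int" where
  "laplacian M u w =
     (if u = w then int (length M) else - int (card {i. i < length M \<and> u + M ! i = w}))"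

definition in_image :: "f23 list \<Rightarrow> (f23 \<Rightarrow> int) \<Rightarrow> bool" where
  "in_image M x \<longleftrightarrow> (\<exists>y :: f23 \<Rightarrow> int. \<forall>u. x u = (\<Sum>w\<in>UNIV. laplacian M u w * y w))"

definition coker_ord :: "f23 list \<Rightarrow> (f23 \<Rightarrow> int) \<Rightarrow> nat" where
  "coker_ord M x = (if \<exists>m>0. in_image M (\<lambda>u. int m * x u)
                    then (LEAST m. m > 0 \<and> in_image M (\<lambda>u. int m * x u)) else 0)"

text \<open>Representatives of the Sylow-2 subgroup of the sandpile group K(G)
  (= the 2-power torsion of coker L).\<close>
definition sylow2_reps :: "f23 list \<Rightarrow> (f23 \<Rightarrow> int) set" where
  "sylow2_reps M = {x. \<exists>k::nat. in_image M (\<lambda>u. 2 ^ k * x u)}"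

text \<open>Order of the largest cyclic factor of the Sylow-2 subgroup of K(G), i.e. the maximal
  order of an element of that finite abelian 2-group.\<close>
definition sylow2_largest_cyclic :: "f23 list \<Rightarrow> nat" where
  "sylow2_largest_cyclic M = Max (coker_ord M ` sylow2_reps M)"

end

(*
  The characters chi_t(u) = (-1)^(t.u) are eigenvectors of the Laplacian with eigenvalues
  lambda_t, and lambda_t <> 0 for t <> 0 because M spans. Hence L z = delta_g - delta_0 has,
  up to constants, the unique real solution z(w) = sum of 1/(2 lambda_t) over the t with
  t.w = t.g = 1, so that K (delta_g - delta_0) lies in the image of L iff K z is integral.
  These index sets have 0, 2 or 4 elements, and every pair of distinct nonzero vectors is one
  of them. As the vectors delta_g - delta_0 span the sum-zero lattice, the Sylow-2 exponent is
  governed by the 2-adic valuation of 1/lambda_s + 1/lambda_t over pairs s <> t: if the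
  valuations d_i differ, the pair with valuations d_1 < d_7 needs the factor 2^(d_7 + 1); if all
  equal d, two odd parts congruent mod 4 need 2^d, and 2^d suffices because an even number of
  odd halves sums to an integer.
*)

theory Submission
  imports Defs
begin

section \<open>2-adic valuations of reciprocal sums\<close>

definition odd_part :: "int \<Rightarrow> int" where
  "odd_part x = x div 2 ^ multiplicity 2 x"

lemma odd_part_decompose: "2 ^ multiplicity 2 x * odd_part x = x"
  unfolding odd_part_def by (simp add: multiplicity_dvd)

lemma odd_odd_part: "x \<noteq> 0 \<Longrightarrow> odd (odd_part x)"
  unfolding odd_part_def using multiplicity_decompose[of x 2] by simp

lemma half_reciprocal_sum_in_Ints_imp_dvd:
  fixes n x y :: int
  assumes "x \<noteq> 0" "y \<noteq> 0" "of_int n / (2 * of_int x) + of_int n / (2 * of_int y) \<in> (\<int> :: real set)"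
  shows "2 * x * y dvd n * (x + y)"
proof -
  have "of_int n / (2 * of_int x) + of_int n / (2 * of_int y)
      = (of_int (n * (x + y)) / of_int (2 * x * y) :: real)"
    using assms(1,2) by (simp add: field_simps)
  hence "(of_int (n * (x + y)) / of_int (2 * x * y) :: real) \<in> \<int>"
    using assms(3) by simp
  thus ?thesis
    using assms(1,2) unfolding of_int_div_of_int_in_Ints_iff by simp
qed

lemma two_power_dvd_of_pair:
  fixes n x y q :: int
  assumes "2 * x * y dvd n * (x + y)" "x + y = 2 ^ e * q" "odd q"
  shows "2 ^ (multiplicity 2 x + multiplicity 2 y + 1) dvd 2 ^ e * n"
proof -
  have "2 ^ (multiplicity 2 x + multiplicity 2 y + 1) dvd 2 * x * y"
    by (simp add: power_add mult_dvd_mono multiplicity_dvd ac_simps)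
  also have "\<dots> dvd (2 ^ e * n) * q"
    using assms(1,2) by (simp add: ac_simps)
  finally show ?thesis
    using assms(3) by (simp add: coprime_dvd_mult_left_iff)
qed

lemma two_power_dvd_cancel: "(2::int) ^ (k + e) dvd 2 ^ e * n \<Longrightarrow> 2 ^ k dvd n"
  by (simp add: power_add ac_simps)

lemma half_reciprocal_sum_valuation_less:
  fixes n x y :: int
  assumes "x \<noteq> 0" "y \<noteq> 0" "multiplicity 2 y < multiplicity 2 x"
    and "of_int n / (2 * of_int x) + of_int n / (2 * of_int y) \<in> (\<int> :: real set)"
  shows "2 ^ (multiplicity 2 x + 1) dvd n"
proof -
  let ?a = "multiplicity 2 x" and ?b = "multiplicity 2 y"
  let ?q = "2 ^ (?a - ?b) * odd_part x + odd_part y"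
  have "x + y = 2 ^ ?b * 2 ^ (?a - ?b) * odd_part x + 2 ^ ?b * odd_part y"
    using odd_part_decompose[of x] odd_part_decompose[of y] assms(3)
    by (simp flip: power_add)
  hence "x + y = 2 ^ ?b * ?q"
    by (simp add: algebra_simps)
  moreover have "odd ?q"
    using assms(2,3) odd_odd_part by simp
  ultimately have "2 ^ (?a + 1 + ?b) dvd 2 ^ ?b * n"
    using two_power_dvd_of_pair[OF half_reciprocal_sum_in_Ints_imp_dvd[OF assms(1,2,4)]]
    by (simp add: ac_simps)
  thus ?thesis by (rule two_power_dvd_cancel)
qed

lemma half_reciprocal_sum_valuation_eq:
  fixes n x y :: int
  assumes "x \<noteq> 0" "y \<noteq> 0" "multiplicity 2 x = multiplicity 2 y"
    and "odd_part x mod 4 = odd_part y mod 4"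
    and "of_int n / (2 * of_int x) + of_int n / (2 * of_int y) \<in> (\<int> :: real set)"
  shows "2 ^ multiplicity 2 x dvd n"
proof -
  let ?a = "multiplicity 2 x"
  have "\<exists>q. a + b = 2 * q \<and> odd q" if "odd a" "odd b" "a mod 4 = b mod 4" for a b :: int
    using that by presburger
  then obtain q where q: "odd_part x + odd_part y = 2 * q" "odd q"
    using odd_odd_part[OF assms(1)] odd_odd_part[OF assms(2)] assms(4) by blast
  have "x + y = 2 ^ ?a * (odd_part x + odd_part y)"
    using odd_part_decompose[of x] odd_part_decompose[of y] assms(3)
    by (simp add: distrib_left)
  hence "x + y = 2 ^ (?a + 1) * q"
    unfolding q(1) by simp
  with two_power_dvd_of_pair[OF half_reciprocal_sum_in_Ints_imp_dvd[OF assms(1,2,5)] _ q(2)]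
  have "2 ^ (?a + ?a + 1) dvd 2 ^ (?a + 1) * n"
    unfolding assms(3) .
  thus ?thesis
    by (metis add.assoc two_power_dvd_cancel)
qed

definition two_exponent :: "('a \<Rightarrow> int) \<Rightarrow> 'a set \<Rightarrow> nat" where
  "two_exponent l A =
     (let D = (\<lambda>t. multiplicity 2 (l t)) ` A in if Min D = Max D then Max D else Max D + 1)"

definition odd_content :: "('a \<Rightarrow> int) \<Rightarrow> 'a set \<Rightarrow> int" where
  "odd_content l A = (\<Prod>t\<in>A. odd_part (l t))"

lemma odd_odd_content:
  assumes "finite A" "\<forall>t\<in>A. l t \<noteq> 0"
  shows "odd (odd_content l A)"
  unfolding odd_content_def using assms by (simp add: even_prod_iff odd_odd_part)

lemma odd_part_dvd_odd_content:
  assumes "finite A" "t \<in> A"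
  shows "odd_part (l t) dvd odd_content l A"
  unfolding odd_content_def using assms by (rule dvd_prodI)

lemma two_exponent_cases:
  fixes l :: "'a \<Rightarrow> int"
  assumes "finite A"
  obtains (equal) "\<And>t. t \<in> A \<Longrightarrow> multiplicity 2 (l t) = two_exponent l A"
    | (unequal) s t where "s \<in> A" "t \<in> A" "multiplicity 2 (l t) < multiplicity 2 (l s)"
        "two_exponent l A = multiplicity 2 (l s) + 1"
        "\<And>u. u \<in> A \<Longrightarrow> multiplicity 2 (l u) < two_exponent l A"
proof (cases "A = {}")
  case False
  define d where "d t = multiplicity 2 (l t)" for t
  have fin: "finite (d ` A)" and ne: "d ` A \<noteq> {}"
    using assms False by auto
  have bounds: "Min (d ` A) \<le> d t" "d t \<le> Max (d ` A)" if "t \<in> A" for t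
    using fin that by simp_all
  show thesis
  proof (cases "Min (d ` A) = Max (d ` A)")
    case True
    hence "two_exponent l A = Max (d ` A)"
      unfolding two_exponent_def d_def[symmetric] Let_def by simp
    moreover have "d t = Max (d ` A)" if "t \<in> A" for t
      using True bounds[OF that] by (metis le_antisym)
    ultimately show thesis
      by (intro equal) (simp add: d_def)
  next
    case unequal: False
    hence c: "two_exponent l A = Max (d ` A) + 1"
      unfolding two_exponent_def d_def[symmetric] Let_def by simp
    obtain s where s: "s \<in> A" "d s = Max (d ` A)"
      using Max_in[OF fin ne] by auto
    obtain t where t: "t \<in> A" "d t = Min (d ` A)"
      using Min_in[OF fin ne] by auto
    show thesis
      using unequal s t bounds[OF s(1)] bounds c
      by (intro that(2)[of s t]) (auto simp: d_def[symmetric] less_Suc_eq_le)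
  qed
qed (rule that(1), simp)

lemma scaled_half_reciprocal_eq:
  fixes l :: "'a \<Rightarrow> int"
  assumes "finite A" "t \<in> A" "l t \<noteq> 0" "multiplicity 2 (l t) \<le> c"
  shows "of_int (2 ^ c * odd_content l A) / (2 * of_int (l t))
           = (of_int (2 ^ (c - multiplicity 2 (l t)) * (odd_content l A div odd_part (l t))) / 2
               :: real)"
proof -
  let ?d = "multiplicity 2 (l t)" and ?r = "odd_content l A div odd_part (l t)"
  have "odd_content l A = odd_part (l t) * ?r"
    using odd_part_dvd_odd_content[OF assms(1,2), of l] by simp
  hence "2 ^ c * odd_content l A = 2 ^ (c - ?d) * ?r * (2 ^ ?d * odd_part (l t))"
    using assms(4) by (simp add: ac_simps flip: power_add)
  also have "\<dots> = 2 ^ (c - ?d) * ?r * l t"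
    unfolding odd_part_decompose ..
  finally show ?thesis
    using assms(3) by (simp add: field_simps)
qed

lemma half_reciprocal_sum_in_Ints:
  fixes l :: "'a \<Rightarrow> int"
  assumes A: "finite A" "\<forall>t\<in>A. l t \<noteq> 0" and S: "S \<subseteq> A" "even (card S)"
  shows "(\<Sum>t\<in>S. of_int (2 ^ two_exponent l A * odd_content l A) / (2 * of_int (l t)))
           \<in> (\<int> :: real set)"
proof -
  define c where "c = two_exponent l A"
  define k where "k t = 2 ^ (c - multiplicity 2 (l t)) * (odd_content l A div odd_part (l t))" for t
  have odd_quotient: "odd (odd_content l A div odd_part (l t))" if "t \<in> A" for t
    using odd_odd_content[OF A] odd_part_dvd_odd_content[OF A(1) that, of l]
    by (metis dvd_mult_div_cancel even_mult_iff)
  have "even (sum k S)"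
    using A(1)
  proof (cases rule: two_exponent_cases[where l = l])
    case equal
    hence "{t \<in> S. odd (k t)} = S"
      using S(1) odd_quotient unfolding k_def c_def by auto
    thus ?thesis
      using S finite_subset[OF S(1) A(1)] by (simp add: even_sum_iff)
  next
    case unequal
    hence "even (k t)" if "t \<in> S" for t
      using S(1) that unfolding k_def c_def by auto
    thus ?thesis by (simp add: dvd_sum)
  qed
  then obtain j where j: "sum k S = 2 * j" by blast
  have "multiplicity 2 (l t) \<le> c" if "t \<in> A" for t
    using A(1) that unfolding c_def
    by (cases rule: two_exponent_cases[where l = l]) (auto intro: less_imp_le)
  hence "(\<Sum>t\<in>S. of_int (2 ^ c * odd_content l A) / (2 * of_int (l t)))
      = (\<Sum>t\<in>S. of_int (k t) / (2 :: real))"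
    using S(1) A unfolding k_def by (intro sum.cong refl scaled_half_reciprocal_eq) auto
  also have "\<dots> = of_int j"
    using arg_cong[OF j, of real_of_int] by (simp flip: sum_divide_distrib)
  finally show ?thesis unfolding c_def by simp
qed

lemma exists_pair_mod_4_eq:
  fixes f :: "'a \<Rightarrow> int"
  assumes "finite A" "3 \<le> card A" "\<forall>t\<in>A. odd (f t)"
  obtains s t where "s \<in> A" "t \<in> A" "s \<noteq> t" "f s mod 4 = f t mod 4"
proof -
  have "\<not> inj_on (\<lambda>t. f t mod 4) A"
  proof
    assume inj: "inj_on (\<lambda>t. f t mod 4) A"
    have "x mod 4 = 1 \<or> x mod 4 = 3" if "odd x" for x :: int
      using that by presburger
    hence "(\<lambda>t. f t mod 4) ` A \<subseteq> {1, 3}"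
      using assms(3) by fastforce
    hence "card ((\<lambda>t. f t mod 4) ` A) \<le> card {1, 3 :: int}"
      by (intro card_mono) simp_all
    thus False
      using inj assms(2) by (simp add: card_image)
  qed
  thus ?thesis
    using that unfolding inj_on_def by blast
qed

lemma exists_pair_half_reciprocal_sum_dvd:
  fixes l :: "'a \<Rightarrow> int"
  assumes A: "finite A" "\<forall>t\<in>A. l t \<noteq> 0" "3 \<le> card A"
  obtains s t where "s \<in> A" "t \<in> A" "s \<noteq> t"
    "\<And>m. of_int (m * odd_content l A) / (2 * of_int (l s))
            + of_int (m * odd_content l A) / (2 * of_int (l t)) \<in> (\<int> :: real set)
          \<Longrightarrow> 2 ^ two_exponent l A dvd m"
proof -
  have cancel: "2 ^ k dvd m" if "2 ^ k dvd m * odd_content l A" for k m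
    using that odd_odd_content[OF A(1,2)] by (simp add: coprime_dvd_mult_left_iff)
  from A(1) show thesis
  proof (cases rule: two_exponent_cases[where l = l])
    case equal
    obtain s t where st: "s \<in> A" "t \<in> A" "s \<noteq> t"
      and mod4: "odd_part (l s) mod 4 = odd_part (l t) mod 4"
      using exists_pair_mod_4_eq[of A "\<lambda>t. odd_part (l t)"] A odd_odd_part by blast
    show thesis
    proof (rule that[OF st])
      fix m
      assume "of_int (m * odd_content l A) / (2 * of_int (l s))
            + of_int (m * odd_content l A) / (2 * of_int (l t)) \<in> (\<int> :: real set)"
      hence "2 ^ multiplicity 2 (l s) dvd m * odd_content l A"
        using A(2) st equal mod4 by (intro half_reciprocal_sum_valuation_eq) auto
      thus "2 ^ two_exponent l A dvd m"
        unfolding equal[OF st(1)] by (rule cancel)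
    qed
  next
    case (unequal s t)
    show thesis
    proof (rule that[OF unequal(1,2)])
      show "s \<noteq> t" using unequal(3) by auto
      fix m
      assume "of_int (m * odd_content l A) / (2 * of_int (l s))
            + of_int (m * odd_content l A) / (2 * of_int (l t)) \<in> (\<int> :: real set)"
      hence "2 ^ (multiplicity 2 (l s) + 1) dvd m * odd_content l A"
        using A(2) unequal by (intro half_reciprocal_sum_valuation_less) auto
      thus "2 ^ two_exponent l A dvd m"
        unfolding unequal(4) by (rule cancel)
    qed
  qed
qed

section \<open>Characters of F_2^3\<close>

lemma bit_UNIV: "(UNIV :: bit set) = {0, 1}"
  by (auto intro: bit.exhaust)

instance bit :: finite
  by standard (simp add: bit_UNIV)

lemma card_bit [simp]: "CARD(bit) = 2"
  by (simp add: bit_UNIV)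

lemma f23_add_self [simp]: "(x::f23) + x = 0"
proof -
  have "(a::bit) + a = 0" for a by (cases a) auto
  thus ?thesis by (simp add: vec_eq_iff)
qed

lemma f23_add_eq_0_iff: "(x::f23) + y = 0 \<longleftrightarrow> x = y"
  by (metis add.assoc add_0 f23_add_self)

lemma dotF2_commute: "dotF2 u v = dotF2 v u"
  unfolding dotF2_def by (simp only: mult.commute)

lemma dotF2_add: "dotF2 u (v + w) = dotF2 u v + dotF2 u w"
  unfolding dotF2_def by (simp only: vector_add_component distrib_left sum.distrib)

lemma dotF2_smult: "dotF2 u (c *s v) = c * dotF2 u v"
  unfolding dotF2_def by (simp only: vector_smult_component sum_distrib_left mult.left_commute)

lemma dotF2_0 [simp]: "dotF2 u 0 = 0" "dotF2 0 u = 0"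
  unfolding dotF2_def by simp_all

lemma exists_dotF2_eq_1:
  assumes "v \<noteq> 0"
  obtains e where "dotF2 e v = 1"
proof -
  from assms obtain i where "v $ i \<noteq> 0" by (auto simp: vec_eq_iff)
  moreover have "dotF2 (axis i 1) v = (\<Sum>j\<in>UNIV. if j = i then v $ j else 0)"
    unfolding dotF2_def axis_def by (intro sum.cong) auto
  ultimately show ?thesis using that by simp
qed

lemma signF2_add: "signF2 u (v + w) = signF2 u v * signF2 u w"
  unfolding signF2_def dotF2_add by (cases "dotF2 u v"; cases "dotF2 u w") simp_all

lemma signF2_commute: "signF2 u v = signF2 v u"
  unfolding signF2_def by (simp add: dotF2_commute)

lemma signF2_add_left: "signF2 (u + v) w = signF2 u w * signF2 v w"
  by (simp add: signF2_commute[of _ w] signF2_add)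

lemma signF2_0 [simp]: "signF2 u 0 = 1" "signF2 0 u = 1"
  unfolding signF2_def by simp_all

lemma sum_shift_f23: "(\<Sum>u\<in>UNIV. f (u + m)) = (\<Sum>u\<in>(UNIV::f23 set). f u)"
  by (rule sum.reindex_bij_witness[of _ "\<lambda>u. u + m" "\<lambda>u. u + m"]) (auto simp: add.assoc)

lemma sum_signF2: "(\<Sum>t\<in>UNIV. signF2 t v) = 8 * of_bool (v = 0)"
proof (cases "v = 0")
  case True
  thus ?thesis by simp
next
  case False
  then obtain e where e: "dotF2 e v = 1" by (rule exists_dotF2_eq_1)
  have "(\<Sum>t\<in>UNIV. signF2 t v) = (\<Sum>t\<in>UNIV. signF2 (t + e) v)"
    by (rule sum_shift_f23[symmetric])
  also have "\<dots> = - (\<Sum>t\<in>UNIV. signF2 t v)"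
  proof -
    have "signF2 e v = -1" using e by (simp add: signF2_def)
    thus ?thesis by (simp add: signF2_add_left sum_negf)
  qed
  finally show ?thesis using False by simp
qed

lemma card_dotF2_eq_1_both:
  "int (card {h. dotF2 h a = 1 \<and> dotF2 h b = 1})
     = 2 * (1 - of_bool (a = 0) - of_bool (b = 0) + of_bool (a = b))"
proof -
  have indicator: "4 * of_bool (dotF2 h a = 1 \<and> dotF2 h b = 1)
      = 1 - signF2 h a - signF2 h b + signF2 h (a + b)" for h
    unfolding signF2_add by (cases "dotF2 h a"; cases "dotF2 h b") (simp_all add: signF2_def)
  have "4 * int (card {h. dotF2 h a = 1 \<and> dotF2 h b = 1})
      = (\<Sum>h\<in>UNIV. 4 * of_bool (dotF2 h a = 1 \<and> dotF2 h b = 1))"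
    by (simp add: sum_distrib_left[symmetric] sum_of_bool_eq)
  also have "\<dots> = 8 * (1 - of_bool (a = 0) - of_bool (b = 0) + of_bool (a = b))"
    unfolding indicator
    by (simp add: sum.distrib sum_subtractf sum_signF2 f23_add_eq_0_iff)
  finally show ?thesis by simp
qed

lemma exists_dotF2_pair:
  assumes "t1 \<noteq> t2" "t1 \<noteq> 0" "t2 \<noteq> 0"
  obtains g w where "{t. dotF2 t w = 1 \<and> dotF2 t g = 1} = {t1, t2}"
proof -
  have "card {h. dotF2 h t1 = 1 \<and> dotF2 h t2 = 1} = 2"
    using card_dotF2_eq_1_both[of t1 t2] assms by simp
  then obtain g w where gw: "{h. dotF2 h t1 = 1 \<and> dotF2 h t2 = 1} = {g, w}" "g \<noteq> w"
    by (auto simp: card_2_iff)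
  hence "dotF2 g t1 = 1" "dotF2 g t2 = 1" "dotF2 w t1 = 1" "dotF2 w t2 = 1" by blast+
  hence pair: "{t1, t2} \<subseteq> {t. dotF2 t w = 1 \<and> dotF2 t g = 1}" and "g \<noteq> 0" "w \<noteq> 0"
    by (auto simp: dotF2_commute)
  hence "card {t. dotF2 t w = 1 \<and> dotF2 t g = 1} = 2"
    using card_dotF2_eq_1_both[of w g] gw(2) by simp
  hence "{t1, t2} = {t. dotF2 t w = 1 \<and> dotF2 t g = 1}"
    using pair assms(1) by (intro card_subset_eq) auto
  thus ?thesis using that by blast
qed

section \<open>The Laplacian and the Fourier transform\<close>

definition Lap :: "f23 list \<Rightarrow> (f23 \<Rightarrow> 'a::comm_ring_1) \<Rightarrow> f23 \<Rightarrow> 'a" where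
  "Lap M f u = (\<Sum>w\<in>UNIV. of_int (laplacian M u w) * f w)"

lemma in_image_iff_Lap: "in_image M x \<longleftrightarrow> (\<exists>y. \<forall>u. x u = Lap M y u)"
  unfolding in_image_def Lap_def by simp

lemma laplacian_commute: "laplacian M u w = laplacian M w u"
proof -
  have "u + v = w \<longleftrightarrow> w + v = u" for v :: f23
    by (auto simp: add.assoc)
  thus ?thesis unfolding laplacian_def by auto
qed

lemma Lap_of_int: "Lap M (\<lambda>w. of_int (f w)) u = of_int (Lap M f u)"
  unfolding Lap_def by simp

lemma Lap_add: "Lap M (\<lambda>w. f w + g w) u = Lap M f u + Lap M g u"
  unfolding Lap_def by (simp add: distrib_left sum.distrib)

lemma Lap_diff: "Lap M (\<lambda>w. f w - g w) u = Lap M f u - Lap M g u"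
  unfolding Lap_def by (simp add: right_diff_distrib sum_subtractf)

lemma Lap_mult: "Lap M (\<lambda>w. c * f w) u = c * Lap M f u"
  unfolding Lap_def by (simp add: sum_distrib_left ac_simps)

lemma Lap_sum: "Lap M (\<lambda>w. \<Sum>g\<in>G. f g w) u = (\<Sum>g\<in>G. Lap M (f g) u)"
  unfolding Lap_def sum_distrib_left by (rule sum.swap)

lemma Lap_altdef:
  assumes "\<forall>v\<in>set M. v \<noteq> 0"
  shows "Lap M f u = of_nat (length M) * f u - (\<Sum>i<length M. f (u + M ! i))"
proof -
  let ?I = "\<lambda>w. {i \<in> {..<length M}. u + M ! i = w}"
  have no_loop: "{i. i < length M \<and> M ! i = 0} = {}"
    using assms by auto
  have "Lap M f u = (\<Sum>w\<in>UNIV. (if w = u then of_nat (length M) * f w else 0)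
                                    - of_nat (card (?I w)) * f w)"
    unfolding Lap_def laplacian_def by (intro sum.cong) (auto simp: algebra_simps no_loop)
  also have "\<dots> = of_nat (length M) * f u - (\<Sum>w\<in>UNIV. \<Sum>i\<in>?I w. f (u + M ! i))"
    by (simp add: sum_subtractf)
  also have "(\<Sum>w\<in>UNIV. \<Sum>i\<in>?I w. f (u + M ! i)) = (\<Sum>i<length M. f (u + M ! i))"
    by (rule sum.group) auto
  finally show ?thesis .
qed

lemma Lap_const:
  assumes "\<forall>v\<in>set M. v \<noteq> 0"
  shows "Lap M (\<lambda>_. c) u = 0"
  unfolding Lap_altdef[OF assms] by simp

lemma Lap_signF2:
  assumes "\<forall>v\<in>set M. v \<noteq> 0"
  shows "Lap M (\<lambda>w. of_int (signF2 t w)) u = of_int (lam M t) * of_int (signF2 t u)"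
  unfolding Lap_altdef[OF assms] lam_def signF2_add
  by (simp add: algebra_simps sum_distrib_left)

definition fourier :: "(f23 \<Rightarrow> 'a::comm_ring_1) \<Rightarrow> f23 \<Rightarrow> 'a" where
  "fourier f t = (\<Sum>u\<in>UNIV. of_int (signF2 t u) * f u)"

lemma fourier_inversion: "(\<Sum>t\<in>UNIV. of_int (signF2 t w) * fourier f t) = 8 * f w"
proof -
  have "(\<Sum>t\<in>UNIV. of_int (signF2 t w) * fourier f t)
      = (\<Sum>u\<in>UNIV. of_int (\<Sum>t\<in>UNIV. signF2 t (w + u)) * f u)"
    unfolding fourier_def sum_distrib_left of_int_sum sum_distrib_right signF2_add
    by (subst sum.swap) (simp add: mult.assoc)
  also have "\<dots> = (\<Sum>u\<in>UNIV. if u = w then 8 * f u else 0)"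
    by (intro sum.cong refl) (auto simp: sum_signF2 f23_add_eq_0_iff)
  finally show ?thesis by simp
qed

lemma fourier_Lap:
  assumes "\<forall>v\<in>set M. v \<noteq> 0"
  shows "fourier (Lap M f) t = of_int (lam M t) * fourier f t"
proof -
  have "fourier (Lap M f) t = (\<Sum>w\<in>UNIV. Lap M (\<lambda>u. of_int (signF2 t u)) w * f w)"
    unfolding fourier_def Lap_def sum_distrib_left sum_distrib_right
    by (subst sum.swap) (simp add: laplacian_commute ac_simps)
  also have "\<dots> = of_int (lam M t) * fourier f t"
    unfolding Lap_signF2[OF assms] fourier_def by (simp add: sum_distrib_left ac_simps)
  finally show ?thesis .
qed

lemma lam_0 [simp]: "lam M 0 = 0"
  unfolding lam_def by simp

lemma sum_in_image_eq_0:
  assumes "\<forall>v\<in>set M. v \<noteq> 0" "in_image M x"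
  shows "(\<Sum>u\<in>UNIV. x u) = 0"
proof -
  obtain y where "\<forall>u. x u = Lap M y u" using assms(2) unfolding in_image_iff_Lap by blast
  hence "(\<Sum>u\<in>UNIV. x u) = fourier (Lap M y) 0" by (simp add: fourier_def)
  thus ?thesis by (simp add: fourier_Lap[OF assms(1)])
qed

lemma lam_nonzero:
  assumes "vec.span (set M) = UNIV" "t \<noteq> 0"
  shows "lam M t \<noteq> 0"
proof
  assume "lam M t = 0"
  hence "(\<Sum>i<length M. 1 - signF2 t (M ! i)) = 0"
    unfolding lam_def by (simp add: sum_subtractf)
  moreover have "0 \<le> 1 - signF2 t v" for v
    by (simp add: signF2_def)
  ultimately have "\<forall>i<length M. signF2 t (M ! i) = 1"
    by (subst (asm) sum_nonneg_eq_0_iff) auto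
  hence "set M \<subseteq> {v. dotF2 t v = 0}"
    by (auto simp: in_set_conv_nth signF2_def split: if_splits)
  moreover have "vec.subspace {v. dotF2 t v = 0}"
    unfolding vec.subspace_def by (auto simp: dotF2_add dotF2_smult)
  ultimately have "vec.span (set M) \<subseteq> {v. dotF2 t v = 0}"
    by (rule vec.span_minimal)
  hence "dotF2 t e = 0" for e
    using assms(1) by blast
  moreover obtain e where "dotF2 e t = 1"
    using assms(2) by (rule exists_dotF2_eq_1)
  ultimately show False
    by (simp add: dotF2_commute[of e])
qed

lemma Lap_eq_0_imp_constant:
  fixes h :: "f23 \<Rightarrow> real"
  assumes "\<forall>v\<in>set M. v \<noteq> 0" "vec.span (set M) = UNIV" "\<And>u. Lap M h u = 0"
  shows "h w = h 0"
proof -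
  have "fourier h t = 0" if "t \<noteq> 0" for t
    using fourier_Lap[OF assms(1), of h t] lam_nonzero[OF assms(2) that] assms(3)
    by (simp add: fourier_def)
  hence "8 * h w = fourier h 0" for w
    unfolding fourier_inversion[symmetric] by (subst sum.remove[of _ 0]) auto
  thus ?thesis by (metis mult_cancel_left zero_neq_numeral)
qed

section \<open>The Green's function and the image of the Laplacian\<close>

definition dipole :: "f23 \<Rightarrow> f23 \<Rightarrow> int" where
  "dipole g u = of_bool (u = g) - of_bool (u = 0)"

text \<open>Expanding in characters, the solution of \<open>L z = \<delta>\<^sub>g - \<delta>\<^sub>0\<close> with \<open>z 0 = 0\<close>
  is \<open>\<Sum>t | t\<cdot>g = 1. (1 - \<chi>\<^sub>t)/(4 \<lambda>\<^sub>t)\<close>, and \<open>(1 - \<chi>\<^sub>t w)/2\<close> is the indicator of \<open>t\<cdot>w = 1\<close>.\<close>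

definition green :: "f23 list \<Rightarrow> f23 \<Rightarrow> f23 \<Rightarrow> real" where
  "green M g w = (\<Sum>t | dotF2 t w = 1 \<and> dotF2 t g = 1. 1 / (2 * of_int (lam M t)))"

lemma green_0 [simp]: "green M g 0 = 0"
  unfolding green_def by simp

lemma sum_Collect_f23: "(\<Sum>t | P t. f t) = (\<Sum>t\<in>(UNIV::f23 set). if P t then f t else 0)"
  by (simp add: sum.If_cases)

lemma sum_signF2_dotF2_eq_1:
  "(\<Sum>t | dotF2 t g = 1. signF2 t u) = 4 * (of_bool (u = 0) - of_bool (u = g))"
proof -
  have "2 * (\<Sum>t | dotF2 t g = 1. signF2 t u) = (\<Sum>t\<in>UNIV. signF2 t u - signF2 t (u + g))"
    unfolding sum_distrib_left signF2_add sum_Collect_f23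
    by (intro sum.cong refl) (auto simp: signF2_def)
  also have "\<dots> = 8 * (of_bool (u = 0) - of_bool (u = g))"
    by (simp add: sum_subtractf sum_signF2 f23_add_eq_0_iff)
  finally show ?thesis by simp
qed

lemma Lap_green:
  assumes "\<forall>v\<in>set M. v \<noteq> 0" "vec.span (set M) = UNIV"
  shows "Lap M (green M g) u = of_int (dipole g u)"
proof -
  let ?T = "{t. dotF2 t g = 1}"
  define c where "c t = 1 / (4 * real_of_int (lam M t))" for t
  have "green M g = (\<lambda>w. \<Sum>t\<in>?T. c t - c t * of_int (signF2 t w))"
    unfolding green_def sum_Collect_f23 c_def
    by (intro ext sum.cong refl) (cases "dotF2 t w"; cases "dotF2 t g"; simp add: signF2_def)
  hence "Lap M (green M g) u = - (\<Sum>t\<in>?T. c t * Lap M (\<lambda>w. of_int (signF2 t w)) u)"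
    by (simp add: Lap_sum Lap_diff Lap_mult Lap_const[OF assms(1)] sum_negf)
  also have "\<dots> = - (\<Sum>t\<in>?T. of_int (signF2 t u)) / 4"
  proof -
    have "lam M t \<noteq> 0" if "t \<in> ?T" for t
      using lam_nonzero[OF assms(2)] that by force
    thus ?thesis by (auto simp: Lap_signF2[OF assms(1)] c_def sum_divide_distrib intro!: sum.cong)
  qed
  also have "\<dots> = of_int (dipole g u)"
    unfolding of_int_sum[symmetric] sum_signF2_dotF2_eq_1 dipole_def by simp
  finally show ?thesis .
qed

lemma in_image_dipole_iff:
  assumes "\<forall>v\<in>set M. v \<noteq> 0" "vec.span (set M) = UNIV"
  shows "in_image M (\<lambda>u. K * dipole g u) \<longleftrightarrow> (\<forall>w. of_int K * green M g w \<in> \<int>)"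
proof
  assume "in_image M (\<lambda>u. K * dipole g u)"
  then obtain y where "\<forall>u. K * dipole g u = Lap M y u"
    unfolding in_image_iff_Lap by blast
  hence y: "Lap M y u = K * dipole g u" for u
    by simp
  define h where "h w = of_int (y w) - of_int K * green M g w" for w
  have "Lap M h u = 0" for u
    unfolding h_def Lap_diff Lap_mult Lap_of_int Lap_green[OF assms] y by simp
  hence "h w = h 0" for w
    by (rule Lap_eq_0_imp_constant[OF assms])
  hence "of_int K * green M g w = of_int (y w - y 0)" for w
    using h_def[of w] h_def[of 0] by simp
  thus "\<forall>w. of_int K * green M g w \<in> \<int>"
    by simp
next
  assume "\<forall>w. of_int K * green M g w \<in> \<int>"
  hence z: "of_int \<lfloor>of_int K * green M g w\<rfloor> = of_int K * green M g w" for w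
    by simp
  have "real_of_int (Lap M (\<lambda>w. \<lfloor>of_int K * green M g w\<rfloor>) u) = of_int (K * dipole g u)" for u
    unfolding Lap_of_int[symmetric] z Lap_mult Lap_green[OF assms] by simp
  thus "in_image M (\<lambda>u. K * dipole g u)"
    unfolding in_image_iff_Lap of_int_eq_iff by metis
qed

lemma in_image_add:
  assumes "in_image M x" "in_image M y"
  shows "in_image M (\<lambda>u. x u + y u)"
proof -
  obtain a b where "\<forall>u. x u = Lap M a u" "\<forall>u. y u = Lap M b u"
    using assms unfolding in_image_iff_Lap by blast
  hence "\<forall>u. x u + y u = Lap M (\<lambda>w. a w + b w) u"
    by (simp add: Lap_add)
  thus ?thesis unfolding in_image_iff_Lap by blast
qed

lemma in_image_mult:
  assumes "in_image M x"
  shows "in_image M (\<lambda>u. c * x u)"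
proof -
  obtain a where "\<forall>u. x u = Lap M a u"
    using assms unfolding in_image_iff_Lap by blast
  hence "\<forall>u. c * x u = Lap M (\<lambda>w. c * a w) u"
    by (simp add: Lap_mult)
  thus ?thesis unfolding in_image_iff_Lap by blast
qed

lemma in_image_sum:
  assumes "finite G" "\<And>g. g \<in> G \<Longrightarrow> in_image M (f g)"
  shows "in_image M (\<lambda>u. \<Sum>g\<in>G. f g u)"
  using assms
proof (induction G rule: finite_induct)
  case empty
  have "Lap M (\<lambda>_. 0) u = 0" for u by (simp add: Lap_def)
  thus ?case unfolding in_image_iff_Lap by (metis sum.empty)
next
  case (insert g G)
  thus ?case by (simp add: in_image_add)
qed

lemma in_image_dvd:
  assumes "in_image M (\<lambda>u. a * x u)" "a dvd b"
  shows "in_image M (\<lambda>u. b * x u)"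
proof -
  obtain k where "b = a * k" using assms(2) by blast
  moreover have "in_image M (\<lambda>u. k * (a * x u))" using assms(1) by (rule in_image_mult)
  ultimately show ?thesis by (simp add: ac_simps)
qed

lemma in_image_gcd:
  assumes "in_image M (\<lambda>u. a * x u)" "in_image M (\<lambda>u. b * x u)"
  shows "in_image M (\<lambda>u. gcd a b * x u)"
proof -
  obtain s t where "s * a + t * b = gcd a b" using bezout_int by blast
  hence "gcd a b * x u = s * (a * x u) + t * (b * x u)" for u
    by (metis distrib_right mult.assoc)
  thus ?thesis using assms by (simp add: in_image_add in_image_mult)
qed

lemma in_image_of_dipoles:
  assumes "\<And>g. in_image M (\<lambda>u. N * dipole g u)" "(\<Sum>u\<in>UNIV. x u) = 0"
  shows "in_image M (\<lambda>u. N * x u)"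
proof -
  have "N * x u = (\<Sum>g\<in>UNIV. x g * (N * dipole g u))" for u
  proof -
    have "(\<Sum>g\<in>UNIV. x g * dipole g u) = x u"
      using assms(2) by (simp add: dipole_def algebra_simps sum_subtractf flip: sum_distrib_left)
    hence "N * x u = N * (\<Sum>g\<in>UNIV. x g * dipole g u)" by simp
    also have "\<dots> = (\<Sum>g\<in>UNIV. x g * (N * dipole g u))"
      by (simp add: sum_distrib_left mult.left_commute)
    finally show ?thesis .
  qed
  thus ?thesis
    using assms(1) by (simp add: in_image_sum in_image_mult)
qed

lemma sylow2_largest_cyclic_eqI:
  assumes "\<And>y. y \<in> sylow2_reps M \<Longrightarrow> in_image M (\<lambda>u. 2 ^ c * y u)"
    and "in_image M (\<lambda>u. 2 ^ c * x u)"
    and "\<And>m. in_image M (\<lambda>u. int m * x u) \<Longrightarrow> 2 ^ c dvd m"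
  shows "sylow2_largest_cyclic M = 2 ^ c"
proof -
  let ?P = "\<lambda>y m. 0 < m \<and> in_image M (\<lambda>u. int m * y u)"
  have ord: "coker_ord M y = (LEAST m. ?P y m)" if "?P y m" for y m
    unfolding coker_ord_def using that by (intro if_P) blast
  have le: "coker_ord M y \<le> 2 ^ c" if "y \<in> sylow2_reps M" for y
  proof -
    have "?P y (2 ^ c)" using assms(1)[OF that] by simp
    thus ?thesis unfolding ord[OF \<open>?P y (2 ^ c)\<close>] by (rule Least_le)
  qed
  have P: "?P x (2 ^ c)" using assms(2) by simp
  have "(LEAST m. ?P x m) = 2 ^ c"
  proof (rule Least_equality)
    show "2 ^ c \<le> m" if "?P x m" for m
      using that assms(3)[of m] by (simp add: dvd_imp_le)
  qed (fact P)
  hence "coker_ord M x = 2 ^ c"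
    using ord[OF P] by simp
  moreover have "x \<in> sylow2_reps M"
    using assms(2) unfolding sylow2_reps_def by blast
  ultimately have max: "2 ^ c \<in> coker_ord M ` sylow2_reps M"
    by (simp add: rev_image_eqI)
  have "coker_ord M ` sylow2_reps M \<subseteq> {..2 ^ c}"
    using le by blast
  hence "finite (coker_ord M ` sylow2_reps M)"
    by (rule finite_subset) simp
  thus ?thesis
    unfolding sylow2_largest_cyclic_def using le max by (intro Max_eqI) blast+
qed

section \<open>The exponent of the Sylow 2-subgroup\<close>

lemma card_nonzero_f23: "card (- {0 :: f23}) = 7"
  by (simp add: Compl_eq_Diff_UNIV card_Diff_singleton)

lemma in_image_scaled_dipole:
  assumes "\<forall>v\<in>set M. v \<noteq> 0" "vec.span (set M) = UNIV"
  shows "in_image M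
           (\<lambda>u. (2 ^ two_exponent (lam M) (- {0}) * odd_content (lam M) (- {0})) * dipole g u)"
  unfolding in_image_dipole_iff[OF assms]
proof
  fix w
  have A: "finite (- {0 :: f23})" "\<forall>t\<in>- {0}. lam M t \<noteq> 0"
    using lam_nonzero[OF assms(2)] by auto
  let ?S = "{t. dotF2 t w = 1 \<and> dotF2 t g = 1}"
  have "?S \<subseteq> - {0}" by auto
  moreover have "even (card ?S)"
  proof -
    have "even (int (card ?S))"
      unfolding card_dotF2_eq_1_both by simp
    thus ?thesis by simp
  qed
  ultimately have "(\<Sum>t\<in>?S. of_int (2 ^ two_exponent (lam M) (- {0}) * odd_content (lam M) (- {0}))
                          / (2 * of_int (lam M t))) \<in> (\<int> :: real set)"
    by (rule half_reciprocal_sum_in_Ints[OF A])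
  thus "of_int (2 ^ two_exponent (lam M) (- {0}) * odd_content (lam M) (- {0})) * green M g w \<in> \<int>"
    unfolding green_def sum_distrib_left by simp
qed

lemma sylow2_reps_annihilated:
  assumes "\<forall>v\<in>set M. v \<noteq> 0" "vec.span (set M) = UNIV" "x \<in> sylow2_reps M"
  shows "in_image M (\<lambda>u. 2 ^ two_exponent (lam M) (- {0}) * x u)"
proof -
  let ?c = "two_exponent (lam M) (- {0})" and ?Od = "odd_content (lam M) (- {0})"
  obtain k where k: "in_image M (\<lambda>u. 2 ^ k * x u)"
    using assms(3) unfolding sylow2_reps_def by blast
  have "(\<Sum>u\<in>UNIV. 2 ^ k * x u) = 0"
    by (rule sum_in_image_eq_0[OF assms(1) k])
  hence "(\<Sum>u\<in>UNIV. x u) = 0"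
    by (simp flip: sum_distrib_left)
  hence "in_image M (\<lambda>u. (2 ^ ?c * ?Od) * x u)"
    using in_image_scaled_dipole[OF assms(1,2)] by (rule in_image_of_dipoles[rotated])
  with k have "in_image M (\<lambda>u. gcd (2 ^ k) (2 ^ ?c * ?Od) * x u)"
    by (rule in_image_gcd)
  moreover have "odd ?Od"
    using lam_nonzero[OF assms(2)] by (intro odd_odd_content) auto
  hence "coprime (gcd (2 ^ k) (2 ^ ?c * ?Od)) ?Od"
    by (intro coprime_divisors[OF gcd_dvd1 dvd_refl]) simp
  hence "gcd (2 ^ k) (2 ^ ?c * ?Od) dvd 2 ^ ?c"
    by (metis coprime_dvd_mult_left_iff gcd_dvd2)
  ultimately show ?thesis
    by (rule in_image_dvd)
qed

lemma exists_sylow2_rep_of_maximal_order: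
  assumes "\<forall>v\<in>set M. v \<noteq> 0" "vec.span (set M) = UNIV"
  obtains x where "in_image M (\<lambda>u. 2 ^ two_exponent (lam M) (- {0}) * x u)"
    and "\<And>m. in_image M (\<lambda>u. int m * x u) \<Longrightarrow> 2 ^ two_exponent (lam M) (- {0}) dvd m"
proof -
  let ?c = "two_exponent (lam M) (- {0})" and ?Od = "odd_content (lam M) (- {0})"
  have A: "finite (- {0 :: f23})" "\<forall>t\<in>- {0}. lam M t \<noteq> 0" "3 \<le> card (- {0 :: f23})"
    using lam_nonzero[OF assms(2)] by (auto simp: card_nonzero_f23)
  obtain t1 t2 where t12: "t1 \<noteq> 0" "t2 \<noteq> 0" "t1 \<noteq> t2"
    and pair: "\<And>m. of_int (m * ?Od) / (2 * of_int (lam M t1))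
                   + of_int (m * ?Od) / (2 * of_int (lam M t2)) \<in> (\<int> :: real set)
                 \<Longrightarrow> 2 ^ ?c dvd m"
    using exists_pair_half_reciprocal_sum_dvd[OF A] by (metis ComplD singletonI)
  obtain g w where S: "{t. dotF2 t w = 1 \<and> dotF2 t g = 1} = {t1, t2}"
    using exists_dotF2_pair[OF t12(3,1,2)] by blast
  show thesis
  proof (rule that[of "\<lambda>u. ?Od * dipole g u"])
    show "in_image M (\<lambda>u. 2 ^ ?c * (?Od * dipole g u))"
      using in_image_scaled_dipole[OF assms] by (simp add: mult.assoc)
  next
    fix m
    assume "in_image M (\<lambda>u. int m * (?Od * dipole g u))"
    hence "of_int (int m * ?Od) * green M g w \<in> \<int>"
      unfolding mult.assoc[symmetric] in_image_dipole_iff[OF assms] by blast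
    hence "2 ^ ?c dvd int m"
      using pair t12(3) unfolding green_def S by (simp add: distrib_left)
    thus "2 ^ ?c dvd m"
      by (metis of_nat_dvd_iff of_nat_numeral of_nat_power)
  qed
qed

theorem mainTheorem15:
  fixes M :: "f23 list"
  assumes nonzero: "\<forall>v\<in>set M. v \<noteq> 0"
    and generates: "vec.span (set M) = UNIV"
    and gcd_mult: "Gcd ((\<lambda>v. count_list M v) ` set M) = 1"
  shows "let d = (\<lambda>u. multiplicity (2::int) (lam M u));
             D = {d u | u. u \<noteq> 0}
         in sylow2_largest_cyclic M =
              (if Min D = Max D then 2 ^ Max D else 2 ^ (Max D + 1))"
proof -
  obtain x where "in_image M (\<lambda>u. 2 ^ two_exponent (lam M) (- {0}) * x u)"
    and "\<And>m. in_image M (\<lambda>u. int m * x u) \<Longrightarrow> 2 ^ two_exponent (lam M) (- {0}) dvd m"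
    using exists_sylow2_rep_of_maximal_order[OF nonzero generates] by blast
  hence "sylow2_largest_cyclic M = 2 ^ two_exponent (lam M) (- {0})"
    using sylow2_reps_annihilated[OF nonzero generates] by (intro sylow2_largest_cyclic_eqI)
  moreover have "{multiplicity 2 (lam M u) | u. u \<noteq> 0} = (\<lambda>u. multiplicity 2 (lam M u)) ` (- {0})"
    by auto
  ultimately show ?thesis
    unfolding two_exponent_def Let_def by (simp add: if_distrib)
qed

end
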